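(* Let $s\ge1$ and $N\ge1$ be integers, $f_s(z)=z^s$, knots $z_k=-1+\frac{2k}{N}$ ($k=0,\dots,N$), and let $g$ be the continuous piecewise-linear function on $[-1,1]$ interpolating $f_s$ at these knots. Then \[ \sup_{z\in[-1,1]}|f_s(z)-g(z)|\ \le\ \frac{s(s-1)}{2N^2}. \] Moreover, there exist $M\le N+1$ and reals $a_i,b_i,c_i$ ($i=1,\dots,M$) with $|a_i|\le1$, $|b_i|\le1$ and $|c_i|\le\max\{s+\frac12,\ \frac{2s(s-1)}{N}\}$ such that $g(z)=\sum_{i=1}^M c_i\,\mathrm{ReLU}(a_iz-b_i)$ for all $z\in[-1,1]$. In particular, for $\varepsilon>0$, choosing $N\ge\max\{1,\lceil\sqrt{s(s-1)/(2\varepsilon)}\rceil\}$ ensures $\sup_{z\in[-1,1]}|f_s(z)-g(z)|\le\varepsilon$, so $M=O(s/\sqrt\varepsilon)$ ReLU units suffice for accuracy $\varepsilon$.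
   Context: $\mathrm{ReLU}(t)=\max\{0,t\}$. *)

theory Defs
  imports Complex_Main
begin

definition relu :: "real \<Rightarrow> real" where
  "relu t = max 0 t"

definition knot :: "nat \<Rightarrow> nat \<Rightarrow> real" where
  "knot N k = -1 + 2 * real k / real N"

text \<open>The continuous piecewise-linear interpolant of f at the knots z_0,...,z_N:
  on [z_k, z_(k+1)] (k = 0..N-1) it is the linear function through
  (z_k, f z_k) and (z_(k+1), f z_(k+1)).\<close>
definition pl_interp :: "(real \<Rightarrow> real) \<Rightarrow> nat \<Rightarrow> real \<Rightarrow> real" where
  "pl_interp f N z =
     (let k = min (N - 1) (nat \<lfloor>(z + 1) * real N / 2\<rfloor>)
      in f (knot N k) + (f (knot N (Suc k)) - f (knot N k)) * (z - knot N k) * real N / 2)"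

end

theory Submission
  imports Defs
begin

text \<open>
  For |y|, |z| \<le> 1 the first-order remainder y^s - z^s - s z^(s-1) (y - z) is at most
  s(s-1)/2 (y - z)^2 (induction on s). The interpolant reproduces the linear part exactly, so on the
  segment [x0, x1] containing z its error is the convex combination of the remainders at x0 and x1
  with weights (x1 - z)/h and (z - x0)/h, hence at most s(s-1)/2 (z - x0)(x1 - z) \<le> s(s-1) h^2/8
  for h = 2/N.

  Telescoping the slopes writes the interpolant as f(-1) + slope_0 relu(z + 1) plus, for every
  interior knot, the jump of the slope there times relu(z - z_k). A slope jump is a second
  difference of z^s divided by h, bounded through the same remainder estimate by s(s-1) h, and the
  first slope is at most s because z^s is s-Lipschitz on [-1,1].
\<close>

lemma abs_power_remainder_le:
  fixes x y :: real
  assumes "\<bar>x\<bar> \<le> 1" "\<bar>y\<bar> \<le> 1"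
  shows "\<bar>y ^ n - x ^ n - real n * x ^ (n - 1) * (y - x)\<bar> \<le> real n * (real n - 1) / 2 * (y - x)\<^sup>2"
proof (induction n)
  case 0
  show ?case by simp
next
  case (Suc n)
  have "y ^ Suc n - x ^ Suc n - real (Suc n) * x ^ n * (y - x)
      = y * (y ^ n - x ^ n - real n * x ^ (n - 1) * (y - x)) + real n * x ^ (n - 1) * (y - x)\<^sup>2"
    by (cases n) (simp_all add: power2_eq_square algebra_simps)
  also have "\<bar>\<dots>\<bar> \<le> real n * (real n - 1) / 2 * (y - x)\<^sup>2 + real n * (y - x)\<^sup>2"
  proof (rule abs_triangle_ineq[THEN order_trans], rule add_mono)
    have "\<bar>y * (y ^ n - x ^ n - real n * x ^ (n - 1) * (y - x))\<bar>
        \<le> \<bar>y ^ n - x ^ n - real n * x ^ (n - 1) * (y - x)\<bar>"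
      using assms(2) by (simp add: abs_mult mult_left_le_one_le)
    then show "\<bar>y * (y ^ n - x ^ n - real n * x ^ (n - 1) * (y - x))\<bar>
        \<le> real n * (real n - 1) / 2 * (y - x)\<^sup>2"
      using Suc.IH by linarith
    have "\<bar>x ^ (n - 1)\<bar> \<le> 1"
      using assms(1) by (simp add: power_abs power_le_one)
    then show "\<bar>real n * x ^ (n - 1) * (y - x)\<^sup>2\<bar> \<le> real n * (y - x)\<^sup>2"
      by (simp add: abs_mult mult_left_le_one_le mult.assoc mult.left_commute[of "real n"])
  qed
  also have "\<dots> = real (Suc n) * (real (Suc n) - 1) / 2 * (y - x)\<^sup>2"
    by (simp add: field_simps)
  finally show ?case
    by simp
qed

lemma linear_interpolation_error_le:
  fixes f :: "real \<Rightarrow> real"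
  assumes "x0 \<le> z" "z \<le> x1" "x0 < x1" "K \<ge> 0"
    and remainder: "\<And>y. y \<in> {x0, x1} \<Longrightarrow> \<bar>f y - f z - D * (y - z)\<bar> \<le> K * (y - z)\<^sup>2"
  shows "\<bar>f x0 + (f x1 - f x0) * (z - x0) / (x1 - x0) - f z\<bar> \<le> K * (x1 - x0)\<^sup>2 / 4"
proof -
  define u v where "u = z - x0" and "v = x1 - z"
  define R0 R1 where "R0 = f x0 - f z + D * u" and "R1 = f x1 - f z - D * v"
  have uv: "u \<ge> 0" "v \<ge> 0" "u + v = x1 - x0" "u + v > 0"
    using assms unfolding u_def v_def by auto
  have R: "\<bar>R0\<bar> \<le> K * u\<^sup>2" "\<bar>R1\<bar> \<le> K * v\<^sup>2"
    using remainder[of x0] remainder[of x1] unfolding R0_def R1_def u_def v_def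
    by (simp_all add: power2_commute algebra_simps)
  \<comment> \<open>The error is the convex combination of the two remainders with weights v/(u+v) and u/(u+v).\<close>
  have "f x0 + (f x1 - f x0) * (z - x0) / (x1 - x0) - f z = (R0 * v + R1 * u) / (u + v)"
    using uv unfolding R0_def R1_def u_def v_def by (simp add: field_simps)
  also have "\<bar>\<dots>\<bar> \<le> (K * u\<^sup>2 * v + K * v\<^sup>2 * u) / (u + v)"
    using uv R
    by (auto simp: abs_mult
        intro!: divide_right_mono abs_triangle_ineq[THEN order_trans] add_mono mult_right_mono)
  also have "\<dots> = K * (u * v)"
    using uv by (simp add: field_simps power2_eq_square)
  also have "\<dots> \<le> K * ((u + v)\<^sup>2 / 4)"
    using \<open>K \<ge> 0\<close> sum_squares_ge_zero[of "u - v" 0]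
    by (intro mult_left_mono) (simp_all add: power2_eq_square algebra_simps)
  finally show ?thesis
    using uv by simp
qed

lemma slope_jump_le:
  fixes f :: "real \<Rightarrow> real"
  assumes "h > 0"
    and remainder: "\<And>y. y \<in> {x - h, x + h} \<Longrightarrow> \<bar>f y - f x - D * (y - x)\<bar> \<le> K * (y - x)\<^sup>2"
  shows "\<bar>(f (x + h) - f x) / h - (f x - f (x - h)) / h\<bar> \<le> 2 * K * h"
proof -
  have "(f (x + h) - f x) / h - (f x - f (x - h)) / h
      = ((f (x + h) - f x - D * h) + (f (x - h) - f x + D * h)) / h"
    using assms(1) by (simp add: field_simps)
  also have "\<bar>\<dots>\<bar> \<le> (K * h\<^sup>2 + K * h\<^sup>2) / h"
    using remainder[of "x + h"] remainder[of "x - h"] assms(1)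
    by (auto intro!: divide_right_mono abs_triangle_ineq[THEN order_trans] add_mono)
  also have "\<dots> = 2 * K * h"
    using assms(1) by (simp add: power2_eq_square)
  finally show ?thesis .
qed

lemma knot_0 [simp]: "knot N 0 = -1"
  by (simp add: knot_def)

lemma knot_Suc: "knot N (Suc k) = knot N k + 2 / real N"
  by (simp add: knot_def add_divide_distrib)

lemma knot_mono: "i \<le> j \<Longrightarrow> knot N i \<le> knot N j"
  by (simp add: knot_def divide_right_mono)

lemma abs_knot_le_1: "k \<le> N \<Longrightarrow> \<bar>knot N k\<bar> \<le> 1"
  by (cases "N = 0") (auto simp: knot_def field_simps)

definition pl_segment :: "nat \<Rightarrow> real \<Rightarrow> nat" where
  "pl_segment N z = min (N - 1) (nat \<lfloor>(z + 1) * real N / 2\<rfloor>)"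

definition pl_slope :: "(real \<Rightarrow> real) \<Rightarrow> nat \<Rightarrow> nat \<Rightarrow> real" where
  "pl_slope f N k = (f (knot N (Suc k)) - f (knot N k)) * real N / 2"

lemma pl_interp_eq_segment:
  "pl_interp f N z =
     f (knot N (pl_segment N z)) + pl_slope f N (pl_segment N z) * (z - knot N (pl_segment N z))"
  by (simp add: pl_interp_def pl_segment_def pl_slope_def Let_def algebra_simps)

lemma pl_segment_bounds:
  assumes "N \<ge> 1" "z \<in> {-1..1}"
  shows "pl_segment N z < N" "knot N (pl_segment N z) \<le> z" "z \<le> knot N (Suc (pl_segment N z))"
proof -
  define t where "t = (z + 1) * real N / 2"
  have t: "0 \<le> t" "t \<le> real N"
    using assms unfolding t_def by auto
  have knot_le_iff: "knot N j \<le> z \<longleftrightarrow> real j \<le> t"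
    and le_knot_iff: "z \<le> knot N j \<longleftrightarrow> t \<le> real j" for j
    using assms(1) unfolding knot_def t_def by (simp_all add: field_simps)
  have "pl_segment N z = min (N - 1) (nat \<lfloor>t\<rfloor>)"
    by (simp add: pl_segment_def t_def)
  then show "pl_segment N z < N" "knot N (pl_segment N z) \<le> z" "z \<le> knot N (Suc (pl_segment N z))"
    using assms(1) t unfolding knot_le_iff le_knot_iff by linarith+
qed

lemma pl_slope_mult_knot_diff:
  "pl_slope f N k * (knot N (Suc k) - knot N k) = f (knot N (Suc k)) - f (knot N k)"
proof (cases "N = 0")
  case True
  then show ?thesis by (simp add: pl_slope_def knot_def)
next
  case False
  then show ?thesis by (simp add: pl_slope_def knot_Suc)
qed

lemma pl_segment_telescope:
  "f (knot N k) + pl_slope f N k * (z - knot N k)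
     = f (-1) + pl_slope f N 0 * (z + 1) + (\<Sum>j=1..k. (pl_slope f N j - pl_slope f N (j - 1)) * (z - knot N j))"
proof (induction k)
  case 0
  show ?case by simp
next
  case (Suc k)
  have "f (knot N (Suc k)) + pl_slope f N (Suc k) * (z - knot N (Suc k))
      = f (knot N k) + pl_slope f N k * (z - knot N k)
        + (pl_slope f N (Suc k) - pl_slope f N k) * (z - knot N (Suc k))"
    using pl_slope_mult_knot_diff[of f N k] by (simp add: algebra_simps)
  then show ?case
    using Suc.IH by simp
qed

lemma sum_relu_knots_eq:
  assumes "k < N" "knot N k \<le> z" "z \<le> knot N (Suc k)"
  shows "(\<Sum>i=1..N-1. w i * relu (z - knot N i)) = (\<Sum>i=1..k. w i * (z - knot N i))"
proof (rule sum.mono_neutral_cong_right)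
  show "{1..k} \<subseteq> {1..N-1}"
    using assms(1) by auto
  show "\<forall>i\<in>{1..N-1} - {1..k}. w i * relu (z - knot N i) = 0"
  proof
    fix i assume "i \<in> {1..N-1} - {1..k}"
    then have "z \<le> knot N i"
      using assms(3) knot_mono[of "Suc k" i N] by auto
    then show "w i * relu (z - knot N i) = 0"
      by (simp add: relu_def)
  qed
  show "w i * relu (z - knot N i) = w i * (z - knot N i)" if "i \<in> {1..k}" for i
    using that assms(2) knot_mono[of i k N] by (simp add: relu_def)
qed simp

lemma pl_interp_eq_relu_sum:
  assumes "N \<ge> 1" "z \<in> {-1..1}"
  shows "pl_interp f N z = f (-1) + pl_slope f N 0 * relu (z + 1)
    + (\<Sum>i=1..N-1. (pl_slope f N i - pl_slope f N (i - 1)) * relu (z - knot N i))"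
  using pl_interp_eq_segment[of f N z] pl_segment_telescope[of f N "pl_segment N z" z]
    sum_relu_knots_eq[OF pl_segment_bounds[OF assms]] assms(2)
  by (simp add: relu_def)

lemma pl_interp_power_error:
  assumes "N \<ge> 1" "z \<in> {-1..1}"
  shows "\<bar>z ^ s - pl_interp (\<lambda>z. z ^ s) N z\<bar> \<le> real s * (real s - 1) / (2 * real N ^ 2)"
proof -
  define k where "k = pl_segment N z"
  define x0 x1 where "x0 = knot N k" and "x1 = knot N (Suc k)"
  have seg: "x0 \<le> z" "z \<le> x1" "x1 - x0 = 2 / real N"
    using pl_segment_bounds[OF assms] unfolding k_def x0_def x1_def by (simp_all add: knot_Suc)
  have "\<bar>x0\<bar> \<le> 1" "\<bar>x1\<bar> \<le> 1" "\<bar>z\<bar> \<le> 1"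
    using pl_segment_bounds(1)[OF assms] assms(2) abs_knot_le_1
    unfolding k_def x0_def x1_def by auto
  then have remainder: "\<bar>y ^ s - z ^ s - real s * z ^ (s - 1) * (y - z)\<bar> \<le> real s * (real s - 1) / 2 * (y - z)\<^sup>2"
    if "y \<in> {x0, x1}" for y
    using that abs_power_remainder_le by blast
  have "pl_interp (\<lambda>z. z ^ s) N z = x0 ^ s + (x1 ^ s - x0 ^ s) * (z - x0) / (x1 - x0)"
    using assms(1) unfolding pl_interp_eq_segment pl_slope_def seg(3)
    by (simp add: k_def x0_def x1_def)
  moreover have "x0 < x1"
    using seg(3) assms(1) by (simp add: algebra_simps)
  moreover have "0 \<le> real s * (real s - 1) / 2"
    by (cases s) simp_all
  ultimately have "\<bar>pl_interp (\<lambda>z. z ^ s) N z - z ^ s\<bar> \<le> real s * (real s - 1) / 2 * (x1 - x0)\<^sup>2 / 4"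
    using linear_interpolation_error_le[OF seg(1,2) _ _ remainder] by simp
  also have "\<dots> = real s * (real s - 1) / (2 * real N ^ 2)"
    using assms(1) by (simp add: seg(3) power2_eq_square field_simps)
  finally show ?thesis
    by (simp add: abs_minus_commute)
qed

lemma abs_pl_slope_power_le:
  assumes "k < N"
  shows "\<bar>pl_slope (\<lambda>z. z ^ s) N k\<bar> \<le> real s"
proof -
  have "\<bar>knot N (Suc k) ^ s - knot N k ^ s\<bar> \<le> real s * \<bar>knot N (Suc k) - knot N k\<bar>"
    using norm_power_diff[of "knot N (Suc k)" "knot N k" s] abs_knot_le_1[of "Suc k" N] abs_knot_le_1[of k N] assms
    by simp
  then have "\<bar>knot N (Suc k) ^ s - knot N k ^ s\<bar> * (real N / 2) \<le> real s * (2 / real N) * (real N / 2)"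
    by (intro mult_right_mono) (simp_all add: knot_Suc)
  then show ?thesis
    using assms by (simp add: pl_slope_def abs_mult)
qed

lemma abs_pl_slope_power_jump_le:
  assumes "1 \<le> k" "k < N"
  shows "\<bar>pl_slope (\<lambda>z. z ^ s) N k - pl_slope (\<lambda>z. z ^ s) N (k - 1)\<bar> \<le> 2 * real s * (real s - 1) / real N"
proof -
  obtain j where k: "k = Suc j"
    using assms(1) by (cases k) auto
  define x h where "x = knot N k" and "h = 2 / real N"
  have h: "h > 0"
    using assms by (simp add: h_def)
  have neighbours: "knot N (Suc k) = x + h" "knot N j = x - h"
    by (simp_all add: x_def h_def k knot_Suc)
  have "\<bar>x\<bar> \<le> 1" "\<bar>x + h\<bar> \<le> 1" "\<bar>x - h\<bar> \<le> 1"
    using assms abs_knot_le_1[of k N] abs_knot_le_1[of "Suc k" N] abs_knot_le_1[of j N]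
    unfolding x_def[symmetric] neighbours by (simp_all add: k)
  then have remainder: "\<bar>y ^ s - x ^ s - real s * x ^ (s - 1) * (y - x)\<bar> \<le> real s * (real s - 1) / 2 * (y - x)\<^sup>2"
    if "y \<in> {x - h, x + h}" for y
    using that abs_power_remainder_le by blast
  have "k - 1 = j"
    using k by simp
  have "pl_slope (\<lambda>z. z ^ s) N k = ((x + h) ^ s - x ^ s) / h"
    unfolding pl_slope_def neighbours(1) x_def[symmetric] by (simp add: h_def)
  moreover have "pl_slope (\<lambda>z. z ^ s) N (k - 1) = (x ^ s - (x - h) ^ s) / h"
    unfolding pl_slope_def \<open>k - 1 = j\<close> k[symmetric] neighbours(2) x_def[symmetric] by (simp add: h_def)
  ultimately have "pl_slope (\<lambda>z. z ^ s) N k - pl_slope (\<lambda>z. z ^ s) N (k - 1)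
      = ((x + h) ^ s - x ^ s) / h - (x ^ s - (x - h) ^ s) / h"
    by simp
  also have "\<bar>\<dots>\<bar> \<le> 2 * (real s * (real s - 1) / 2) * h"
    by (rule slope_jump_le[OF h remainder])
  also have "\<dots> = 2 * real s * (real s - 1) / real N"
    by (simp add: h_def)
  finally show ?thesis .
qed

lemma pl_interp_power_relu_network:
  fixes s N :: nat
  assumes "s \<ge> 1" and "N \<ge> 1"
  shows "\<exists>M a b c. M \<le> N + 1 \<and>
          (\<forall>i\<in>{1..M}. \<bar>a i\<bar> \<le> 1 \<and> \<bar>b i\<bar> \<le> 1 \<and>
              \<bar>c i\<bar> \<le> max (real s + 1/2) (2 * real s * (real s - 1) / real N)) \<and>
          (\<forall>z\<in>{-1..1}. pl_interp (\<lambda>z. z ^ s) N z = (\<Sum>i=1..M. c i * relu (a i * z - b i)))"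
proof -
  \<comment> \<open>Unit N is the constant relu (0 * z + 1) = 1, unit N + 1 is relu (z + 1),
    and unit i < N is the hinge at the i-th knot.\<close>
  define a :: "nat \<Rightarrow> real" where "a i = (if i = N then 0 else 1)" for i
  define b where "b i = (if i < N then knot N i else -1)" for i
  define c where "c i = (if i < N then pl_slope (\<lambda>z. z ^ s) N i - pl_slope (\<lambda>z. z ^ s) N (i - 1)
    else if i = N then (-1) ^ s else pl_slope (\<lambda>z. z ^ s) N 0)" for i
  have units: "\<bar>a i\<bar> \<le> 1 \<and> \<bar>b i\<bar> \<le> 1 \<and> \<bar>c i\<bar> \<le> max (real s + 1/2) (2 * real s * (real s - 1) / real N)"
    if "i \<in> {1..N + 1}" for i
    using that abs_pl_slope_power_jump_le[of i N s] abs_pl_slope_power_le[of 0 N s] abs_knot_le_1[of i N] assms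
    by (auto simp: a_def b_def c_def le_max_iff_disj)
  have network: "pl_interp (\<lambda>z. z ^ s) N z = (\<Sum>i=1..N + 1. c i * relu (a i * z - b i))"
    if "z \<in> {-1..1}" for z
  proof -
    have "{1..N + 1} = insert (N + 1) (insert N {1..N - 1})"
      using assms(2) by auto
    moreover have "(\<Sum>i=1..N - 1. c i * relu (a i * z - b i))
        = (\<Sum>i=1..N - 1. (pl_slope (\<lambda>z. z ^ s) N i - pl_slope (\<lambda>z. z ^ s) N (i - 1)) * relu (z - knot N i))"
      by (intro sum.cong) (auto simp: a_def b_def c_def)
    ultimately show ?thesis
      using pl_interp_eq_relu_sum[OF assms(2) that, of "\<lambda>z. z ^ s"] assms(2)
      by (simp add: a_def b_def c_def relu_def)
  qed
  show ?thesis
    using units network by blast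
qed

lemma div_two_mul_square_le_of_sqrt_le:
  fixes Q \<epsilon> n :: real
  assumes "Q \<ge> 0" "\<epsilon> > 0" "sqrt (Q / (2 * \<epsilon>)) \<le> n"
  shows "Q / (2 * n\<^sup>2) \<le> \<epsilon>"
proof (cases "n = 0")
  case True
  then show ?thesis
    using assms by simp
next
  case False
  have "Q / (2 * \<epsilon>) \<le> n\<^sup>2"
    using assms(3) by (rule sqrt_le_D)
  then show ?thesis
    using assms(2) False by (simp add: field_simps)
qed

theorem mainTheorem17:
  fixes s N :: nat
  assumes "s \<ge> 1" and "N \<ge> 1"
  defines "g \<equiv> pl_interp (\<lambda>z. z ^ s) N"
  shows "(\<forall>z\<in>{-1..1}. \<bar>z ^ s - g z\<bar> \<le> real s * (real s - 1) / (2 * real N ^ 2))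
    \<and> (\<exists>M a b c. M \<le> N + 1 \<and>
          (\<forall>i\<in>{1..M}. \<bar>a i\<bar> \<le> 1 \<and> \<bar>b i\<bar> \<le> 1 \<and>
              \<bar>c i\<bar> \<le> max (real s + 1/2) (2 * real s * (real s - 1) / real N)) \<and>
          (\<forall>z\<in>{-1..1}. g z = (\<Sum>i=1..M. c i * relu (a i * z - b i))))
    \<and> (\<forall>\<epsilon>>0. real N \<ge> max 1 (real_of_int \<lceil>sqrt (real s * (real s - 1) / (2 * \<epsilon>))\<rceil>)
          \<longrightarrow> (\<forall>z\<in>{-1..1}. \<bar>z ^ s - g z\<bar> \<le> \<epsilon>))"
proof -
  have error: "\<bar>z ^ s - g z\<bar> \<le> real s * (real s - 1) / (2 * real N ^ 2)" if "z \<in> {-1..1}" for z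
    unfolding g_def using assms(2) that by (rule pl_interp_power_error)
  have tolerance: "real s * (real s - 1) / (2 * real N ^ 2) \<le> \<epsilon>"
    if "\<epsilon> > 0" "real N \<ge> max 1 (real_of_int \<lceil>sqrt (real s * (real s - 1) / (2 * \<epsilon>))\<rceil>)" for \<epsilon>
  proof (rule div_two_mul_square_le_of_sqrt_le)
    show "0 \<le> real s * (real s - 1)"
      using assms(1) by simp
    show "sqrt (real s * (real s - 1) / (2 * \<epsilon>)) \<le> real N"
      using that(2) le_of_int_ceiling by (meson max.bounded_iff order_trans)
  qed fact
  show ?thesis
    using error tolerance pl_interp_power_relu_network[OF assms(1,2), folded g_def]
    by (meson order_trans)
qed

end
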